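(* Assume the setting described in the context. Then: (i) Define, for each input-information value $J$, the random quantity $$\Delta s(J)=\int_{\mathbb{R}}\Pi_X(x\mid J)\,\log_2\frac{p_1(x;J)}{p(x;J)}\,dx,$$ which equals $KL[\Pi_X(\cdot\mid J)\,\|\,p(\cdot;J)]-KL[\Pi_X(\cdot\mid J)\,\|\,p_1(\cdot;J)]$ whenever both divergences are finite. Then $$E_{\mathrm{post}}\Big\{E_{\mathcal J}\big[\Delta s(\mathcal J)\big]\Big\}=\int_0^1\bar\pi(f)\log_2\bar\pi(f)\,df\;\ge\;0,$$ with equality if and only if $\bar\pi(f)=1$ for almost every $f\in[0,1]$, in which case $p_1(\cdot;J)=p(\cdot;J)$ almost everywhere for every $J$. In particular, in expectation over $\mathcal J$ and over the epistemic uncertainty, $\Pi_X(\cdot\mid J)$ is closer in relative entropy to $p_1(\cdot;J)$ than to $p(\cdot;J)$ unless $p_1=p$ almost everywhere. (ii) Let $\tilde G(f)=\int_0^f\bar\pi(f')\,df'$, so that $\tilde G(\tilde F(x;J))$ is the cumulative distribution function of $p_1(\cdot;J)$ (the PIT of the recalibrated forecast). For each $J$ define the random density of $G=\tilde G(F)$ by $\Pi_G(g\mid J)=\Pi(f\mid J)/\bar\pi(f)$ where $g=\tilde G(f)$, and let $\Pi_G(g\mid C)=E_{\mathcal J}[\Pi_G(g\mid\mathcal J)]$. Then for (almost) every $g\in[0,1]$, $$E_{\mathrm{post}}\{\Pi_G(g\mid C)\}=1,$$ i.e. the recalibrated forecast is, on average over the epistemic uncertainty, probabilistically calibrated (its expected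 PIT density is uniform on $[0,1]$).
   Context: Setting. $\mathcal J$ is a random variable ("input information") with distribution denoted by $E_{\mathcal J}$ for expectations. For each value $J$, $p(\cdot;J)$ is a probability density on $\mathbb{R}$ (the published forecast) with $p(x;J)>0$ for all $x$, and $\tilde F(x;J)=\int_{-\infty}^x p(x';J)\,dx'$ is its cumulative distribution function (the probability integral transform, PIT), a continuous strictly increasing bijection from $\mathbb{R}$ onto $(0,1)$. Epistemic uncertainty is modeled by a separate probability space with expectation $E_{\mathrm{post}}$ (the posterior given training PIT data): on it, for each $J$, $\Pi(\cdot\mid J)$ is a random probability density on $[0,1]$ (the imperfectly known ideal density of the PIT variable $F$ given $J$), jointly measurable in all arguments. Define the random density $\Pi(f\mid C)=E_{\mathcal J}[\Pi(f\mid\mathcal J)]$ and the predictive density $\bar\pi(f)=E_{\mathrm{post}}\{\Pi(f\mid C)\}$, assumed to be a strictly positive probability density on $[0,1]$. The imperfectly known ideal forecast density of the predictand is $\Pi_X(x\mid J)=\Pi(\tilde F(x;J)\mid J)\,p(x;J)$, and the recalibrated forecast is $p_1(x;J)=\bar\pi(\tilde F(x;J))\,p(x;J)$. The Kullback–Leibler divergence is $KL[f_2\|f_1]=\int f_2\log_2(f_2/f_1)$. All integrals and expectations are assumed finite, and expectations over $\mathcal J$ and over the epistemic uncertainty may be interchanged with integrals (Fubini). *)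

theory Defs
  imports "HOL-Probability.Probability"
begin

text \<open>The input information lives on a probability space MJ (type 'j),
the epistemic (posterior) uncertainty on a probability space MP (type 'w).
p J x is the published forecast density; PI w J f is the random ideal PIT density.\<close>

definition PIT :: "('j \<Rightarrow> real \<Rightarrow> real) \<Rightarrow> 'j \<Rightarrow> real \<Rightarrow> real" where
  "PIT p J x = (LINT t:{..x}|lborel. p J t)"

definition PiC :: "'j measure \<Rightarrow> ('w \<Rightarrow> 'j \<Rightarrow> real \<Rightarrow> real) \<Rightarrow> 'w \<Rightarrow> real \<Rightarrow> real" where
  "PiC MJ PI w f = (\<integral>J. PI w J f \<partial>MJ)"

definition pibar :: "'w measure \<Rightarrow> 'j measure \<Rightarrow> ('w \<Rightarrow> 'j \<Rightarrow> real \<Rightarrow> real) \<Rightarrow> real \<Rightarrow> real" where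
  "pibar MP MJ PI f = (\<integral>w. PiC MJ PI w f \<partial>MP)"

definition PiX :: "('w \<Rightarrow> 'j \<Rightarrow> real \<Rightarrow> real) \<Rightarrow> ('j \<Rightarrow> real \<Rightarrow> real) \<Rightarrow> 'w \<Rightarrow> 'j \<Rightarrow> real \<Rightarrow> real" where
  "PiX PI p w J x = PI w J (PIT p J x) * p J x"

definition p1 :: "'w measure \<Rightarrow> 'j measure \<Rightarrow> ('w \<Rightarrow> 'j \<Rightarrow> real \<Rightarrow> real) \<Rightarrow> ('j \<Rightarrow> real \<Rightarrow> real) \<Rightarrow> 'j \<Rightarrow> real \<Rightarrow> real" where
  "p1 MP MJ PI p J x = pibar MP MJ PI (PIT p J x) * p J x"

definition KL :: "(real \<Rightarrow> real) \<Rightarrow> (real \<Rightarrow> real) \<Rightarrow> real" where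
  "KL f2 f1 = (\<integral>x. f2 x * log 2 (f2 x / f1 x) \<partial>lborel)"

definition delta_s :: "'w measure \<Rightarrow> 'j measure \<Rightarrow> ('w \<Rightarrow> 'j \<Rightarrow> real \<Rightarrow> real) \<Rightarrow> ('j \<Rightarrow> real \<Rightarrow> real) \<Rightarrow> 'w \<Rightarrow> 'j \<Rightarrow> real" where
  "delta_s MP MJ PI p w J =
     (\<integral>x. PiX PI p w J x * log 2 (p1 MP MJ PI p J x / p J x) \<partial>lborel)"

definition Gt :: "'w measure \<Rightarrow> 'j measure \<Rightarrow> ('w \<Rightarrow> 'j \<Rightarrow> real \<Rightarrow> real) \<Rightarrow> real \<Rightarrow> real" where
  "Gt MP MJ PI f = (LINT t:{0..f}|lborel. pibar MP MJ PI t)"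

definition PiG :: "'w measure \<Rightarrow> 'j measure \<Rightarrow> ('w \<Rightarrow> 'j \<Rightarrow> real \<Rightarrow> real) \<Rightarrow> 'w \<Rightarrow> 'j \<Rightarrow> real \<Rightarrow> real" where
  "PiG MP MJ PI w J g =
     (let f = the_inv_into {0..1} (Gt MP MJ PI) g in PI w J f / pibar MP MJ PI f)"

definition PiGC :: "'w measure \<Rightarrow> 'j measure \<Rightarrow> ('w \<Rightarrow> 'j \<Rightarrow> real \<Rightarrow> real) \<Rightarrow> 'w \<Rightarrow> real \<Rightarrow> real" where
  "PiGC MP MJ PI w g = (\<integral>J. PiG MP MJ PI w J g \<partial>MJ)"

end

theory Submission
  imports Defs
begin

text \<open>The probability integral transform F = PIT p J pushes the forecast p(\<cdot>;J) to the uniform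
law on [0,1], so the substitution f = F(x) turns every x-integral against p into an f-integral
over [0,1]. Since p1/p = pibar(F) and \<Pi>X = \<Pi>(F|J) p, this gives
\<Delta>s(J) = \<integral> \<Pi>(f|J) log2 pibar(f) df, and after Fubini its double expectation is
\<integral> pibar log2 pibar, which is nonnegative with equality only for pibar = 1 by Gibbs'
inequality t ln t \<ge> t - 1 for a density on a set of measure one. The same substitution shows that
Gt \<circ> F is the CDF of p1; as Gt is a strictly increasing bijection of [0,1], the expected density
of G = Gt(F) at g = Gt(f) is pibar(f)/pibar(f) = 1.\<close>

section \<open>Gibbs' inequality\<close>

lemma diff_one_le_mult_ln:
  fixes x :: real
  assumes "0 < x"
  shows "x - 1 \<le> x * ln x"
  using ln_le_minus_one[of "inverse x"] assms by (simp add: ln_inverse ln_div field_simps)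

lemma mult_ln_eq_diff_one_iff:
  fixes x :: real
  assumes "0 < x"
  shows "x * ln x = x - 1 \<longleftrightarrow> x = 1"
proof
  assume "x * ln x = x - 1"
  then have "ln (inverse x) = inverse x - 1"
    using assms by (simp add: ln_inverse ln_div field_simps)
  then show "x = 1"
    using ln_eq_minus_one[of "inverse x"] assms by simp
qed simp

lemma
  fixes b :: "'a \<Rightarrow> real"
  assumes A: "A \<in> sets M" "emeasure M A = 1" and c: "1 < c"
    and pos: "\<And>x. x \<in> A \<Longrightarrow> 0 < b x"
    and b_int: "set_integrable M A b" and b_norm: "(LINT x:A|M. b x) = 1"
    and blog_int: "set_integrable M A (\<lambda>x. b x * log c (b x))"
  shows set_integral_mult_log_nonneg: "0 \<le> (LINT x:A|M. b x * log c (b x))"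
    and set_integral_mult_log_eq_0_iff:
      "(LINT x:A|M. b x * log c (b x)) = 0 \<longleftrightarrow> (AE x in M. x \<in> A \<longrightarrow> b x = 1)"
proof -
  let ?I = "LINT x:A|M. b x * log c (b x)"
  let ?\<phi> = "\<lambda>x. indicator A x * (b x * ln (b x) - (b x - 1))"
  have \<phi>_eq: "?\<phi> x = ln c * (indicator A x * (b x * log c (b x))) - (indicator A x * b x - indicator A x)" for x
    using c by (simp add: log_def indicator_def algebra_simps)
  have one_int: "integrable M (\<lambda>x. indicator A x :: real)"
    using A by (intro integrable_real_indicator) auto
  have blog_int': "integrable M (\<lambda>x. indicator A x * (b x * log c (b x)))"
    and b_int': "integrable M (\<lambda>x. indicator A x * b x)"
    using blog_int b_int by (simp_all add: set_integrable_def)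
  have \<phi>_int: "integrable M ?\<phi>"
    unfolding \<phi>_eq using blog_int' b_int' one_int by auto
  have "(\<integral>x. ?\<phi> x \<partial>M) = ln c * ?I - (1 - 1)"
    unfolding \<phi>_eq using blog_int' b_int' one_int b_norm A
    by (simp add: set_lebesgue_integral_def measure_def)
  then have \<phi>_integral: "(\<integral>x. ?\<phi> x \<partial>M) = ln c * ?I" by simp
  have \<phi>_nonneg: "0 \<le> ?\<phi> x" for x
    using diff_one_le_mult_ln[OF pos, of x] by (simp add: indicator_def)
  have "0 \<le> ln c * ?I"
    unfolding \<phi>_integral[symmetric] using \<phi>_nonneg by (intro integral_nonneg_AE) auto
  with c show "0 \<le> ?I" by (simp add: zero_le_mult_iff)
  have "?I = 0 \<longleftrightarrow> (\<integral>x. ?\<phi> x \<partial>M) = 0" using c \<phi>_integral by simp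
  also have "\<dots> \<longleftrightarrow> (AE x in M. ?\<phi> x = 0)"
    using \<phi>_int \<phi>_nonneg by (intro integral_nonneg_eq_0_iff_AE) auto
  also have "\<dots> \<longleftrightarrow> (AE x in M. x \<in> A \<longrightarrow> b x = 1)"
    using mult_ln_eq_diff_one_iff[OF pos] by (intro AE_cong) (auto simp: indicator_def)
  finally show "?I = 0 \<longleftrightarrow> (AE x in M. x \<in> A \<longrightarrow> b x = 1)" .
qed

section \<open>Fubini's theorem for three factors\<close>

lemma pair_measure_assoc:
  assumes "sigma_finite_measure A" "sigma_finite_measure B" "sigma_finite_measure C"
  shows "distr (A \<Otimes>\<^sub>M (B \<Otimes>\<^sub>M C)) ((A \<Otimes>\<^sub>M B) \<Otimes>\<^sub>M C) (\<lambda>(a, b, c). ((a, b), c))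
    = (A \<Otimes>\<^sub>M B) \<Otimes>\<^sub>M C"
proof -
  interpret B: sigma_finite_measure B by fact
  interpret C: sigma_finite_measure C by fact
  interpret AB: pair_sigma_finite A B using assms by (simp add: pair_sigma_finite_def)
  interpret BC: pair_sigma_finite B C using assms by (simp add: pair_sigma_finite_def)
  let ?T = "\<lambda>(a, b, c). ((a, b), c)"
  show ?thesis
  proof (rule pair_measure_eqI[symmetric])
    fix X Y assume X [measurable]: "X \<in> sets (A \<Otimes>\<^sub>M B)" and Y [measurable]: "Y \<in> sets C"
    have slice: "Pair a -` (?T -` (X \<times> Y) \<inter> space (A \<Otimes>\<^sub>M (B \<Otimes>\<^sub>M C))) = (Pair a -` X) \<times> Y"
      if "a \<in> space A" for a
      using that sets.sets_into_space[OF X] sets.sets_into_space[OF Y] by (auto simp: space_pair_measure)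
    have "emeasure (distr (A \<Otimes>\<^sub>M (B \<Otimes>\<^sub>M C)) ((A \<Otimes>\<^sub>M B) \<Otimes>\<^sub>M C) ?T) (X \<times> Y)
        = emeasure (A \<Otimes>\<^sub>M (B \<Otimes>\<^sub>M C)) (?T -` (X \<times> Y) \<inter> space (A \<Otimes>\<^sub>M (B \<Otimes>\<^sub>M C)))"
      by (rule emeasure_distr) auto
    also have "\<dots> = (\<integral>\<^sup>+a. emeasure B (Pair a -` X) * emeasure C Y \<partial>A)"
    proof (subst BC.emeasure_pair_measure_alt, simp, rule nn_integral_cong)
      fix a assume a: "a \<in> space A"
      show "emeasure (B \<Otimes>\<^sub>M C) (Pair a -` (?T -` (X \<times> Y) \<inter> space (A \<Otimes>\<^sub>M (B \<Otimes>\<^sub>M C))))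
          = emeasure B (Pair a -` X) * emeasure C Y"
        unfolding slice[OF a] by (rule C.emeasure_pair_measure_Times[OF sets_Pair1[OF X] Y])
    qed
    also have "\<dots> = emeasure (A \<Otimes>\<^sub>M B) X * emeasure C Y"
      by (simp add: nn_integral_multc B.measurable_emeasure_Pair B.emeasure_pair_measure_alt)
    finally show "emeasure (A \<Otimes>\<^sub>M B) X * emeasure C Y
        = emeasure (distr (A \<Otimes>\<^sub>M (B \<Otimes>\<^sub>M C)) ((A \<Otimes>\<^sub>M B) \<Otimes>\<^sub>M C) ?T) (X \<times> Y)" ..
  qed (use assms in \<open>auto intro: AB.sigma_finite_measure_axioms\<close>)
qed

lemma
  fixes h :: "'a \<Rightarrow> 'b \<Rightarrow> 'c \<Rightarrow> real"
  assumes "sigma_finite_measure A" "sigma_finite_measure B" "sigma_finite_measure C"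
    and h: "integrable (A \<Otimes>\<^sub>M B \<Otimes>\<^sub>M C) (\<lambda>(a, b, c). h a b c)"
  shows integrable_iterated_integral_snd: "integrable C (\<lambda>c. \<integral>a. \<integral>b. h a b c \<partial>B \<partial>A)"
    and Fubini_integral_triple:
      "(\<integral>a. \<integral>b. \<integral>c. h a b c \<partial>C \<partial>B \<partial>A) = (\<integral>c. \<integral>a. \<integral>b. h a b c \<partial>B \<partial>A \<partial>C)"
proof -
  interpret AB: pair_sigma_finite A B using assms by (simp add: pair_sigma_finite_def)
  interpret ABC: pair_sigma_finite "A \<Otimes>\<^sub>M B" C
    using assms AB.sigma_finite_measure_axioms by (simp add: pair_sigma_finite_def)
  have h_meas: "(\<lambda>(a, b, c). h a b c) \<in> borel_measurable (A \<Otimes>\<^sub>M B \<Otimes>\<^sub>M C)"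
    using h by auto
  have [measurable]: "(\<lambda>x. h (snd (fst x)) (snd x) (fst (fst x))) \<in> borel_measurable ((C \<Otimes>\<^sub>M A) \<Otimes>\<^sub>M B)"
    using measurable_compose[OF _ h_meas, of "\<lambda>((c, a), b). (a, b, c)"] by (simp add: case_prod_beta')
  have "(\<lambda>c. \<integral>a. \<integral>b. h a b c \<partial>B \<partial>A) \<in> borel_measurable C"
    by measurable
  let ?g = "\<lambda>(ab, c). h (fst ab) (snd ab) c"
  have assoc: "(\<lambda>(a, b, c). ((a, b), c)) \<in> measurable (A \<Otimes>\<^sub>M B \<Otimes>\<^sub>M C) ((A \<Otimes>\<^sub>M B) \<Otimes>\<^sub>M C)"
    by measurable
  have g_meas: "?g \<in> borel_measurable ((A \<Otimes>\<^sub>M B) \<Otimes>\<^sub>M C)"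
    using measurable_compose[OF _ h_meas, of "\<lambda>(ab, c). (fst ab, snd ab, c)"] by (simp add: case_prod_beta')
  have "integrable (distr (A \<Otimes>\<^sub>M B \<Otimes>\<^sub>M C) ((A \<Otimes>\<^sub>M B) \<Otimes>\<^sub>M C) (\<lambda>(a, b, c). ((a, b), c))) ?g"
    unfolding integrable_distr_eq[OF assoc g_meas] using h by (simp add: case_prod_beta')
  then have g: "integrable ((A \<Otimes>\<^sub>M B) \<Otimes>\<^sub>M C) ?g"
    by (simp only: pair_measure_assoc[OF assms(1-3)])
  have "AE c in C. integrable (A \<Otimes>\<^sub>M B) (\<lambda>ab. ?g (ab, c))"
    using ABC.AE_integrable_snd[of "\<lambda>ab c. ?g (ab, c)"] g by simp
  then have inner: "AE c in C. (\<integral>ab. ?g (ab, c) \<partial>(A \<Otimes>\<^sub>M B)) = (\<integral>a. \<integral>b. h a b c \<partial>B \<partial>A)"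
  proof (rule eventually_mono)
    fix c assume "integrable (A \<Otimes>\<^sub>M B) (\<lambda>ab. ?g (ab, c))"
    then show "(\<integral>ab. ?g (ab, c) \<partial>(A \<Otimes>\<^sub>M B)) = (\<integral>a. \<integral>b. h a b c \<partial>B \<partial>A)"
      using AB.integral_fst[of "\<lambda>a b. h a b c"] by (simp add: case_prod_beta')
  qed
  have int_snd: "integrable C (\<lambda>c. \<integral>ab. ?g (ab, c) \<partial>(A \<Otimes>\<^sub>M B))"
    using ABC.integrable_snd[of "\<lambda>ab c. ?g (ab, c)"] g by simp
  then show "integrable C (\<lambda>c. \<integral>a. \<integral>b. h a b c \<partial>B \<partial>A)"
    by (rule integrable_cong_AE_imp) (use inner in auto)
  have "(\<integral>a. \<integral>b. \<integral>c. h a b c \<partial>C \<partial>B \<partial>A) = (\<integral>ab. \<integral>c. ?g (ab, c) \<partial>C \<partial>(A \<Otimes>\<^sub>M B))"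
    using AB.integral_fst[of "\<lambda>a b. \<integral>c. h a b c \<partial>C"] ABC.integrable_fst[of "\<lambda>ab c. ?g (ab, c)"] g
    by (simp add: case_prod_beta')
  also have "\<dots> = integral\<^sup>L ((A \<Otimes>\<^sub>M B) \<Otimes>\<^sub>M C) ?g"
    using ABC.integral_fst[of "\<lambda>ab c. ?g (ab, c)"] g by simp
  also have "\<dots> = (\<integral>c. \<integral>ab. ?g (ab, c) \<partial>(A \<Otimes>\<^sub>M B) \<partial>C)"
    using ABC.integral_snd[of "\<lambda>ab c. ?g (ab, c)"] g by simp
  also have "\<dots> = (\<integral>c. \<integral>a. \<integral>b. h a b c \<partial>B \<partial>A \<partial>C)"
    using int_snd by (intro integral_cong_AE inner) auto
  finally show "(\<integral>a. \<integral>b. \<integral>c. h a b c \<partial>C \<partial>B \<partial>A) = (\<integral>c. \<integral>a. \<integral>b. h a b c \<partial>B \<partial>A \<partial>C)" .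
qed

section \<open>The probability integral transform\<close>

lemma (in real_distribution) distributed_cdf_uniform:
  assumes cont: "\<And>x. isCont (cdf M) x" and mono: "strict_mono (cdf M)"
  shows "distributed M lborel (cdf M) (\<lambda>x. ennreal (indicator {0..1} x))"
proof -
  have F_meas: "cdf M \<in> borel_measurable M"
    using cont by (intro measurable_finite_borel borel_measurable_continuous_onI)
      (auto simp: continuous_at_imp_continuous_on)
  have F_pos: "0 < cdf M x" for x
    using mono[THEN strict_monoD, of "x - 1" x] cdf_nonneg[of "x - 1"] by simp
  have F_less_1: "cdf M x < 1" for x
    using mono[THEN strict_monoD, of x "x + 1"] cdf_bounded_prob[of "x + 1"] by simp
  have "\<P>(x in M. cdf M x \<le> t) = t" if t: "0 \<le> t" "t \<le> 1" for t
  proof -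
    consider "t = 0" | "t = 1" | "0 < t" "t < 1" using t by linarith
    then show ?thesis
    proof cases
      case 1
      with F_pos have "{x \<in> space M. cdf M x \<le> t} = {}" by (auto simp: not_le)
      with 1 show ?thesis by simp
    next
      case 2
      with F_less_1 have "{x \<in> space M. cdf M x \<le> t} = space M" by (auto intro: less_imp_le)
      then show ?thesis unfolding 2 by (simp only: prob_space)
    next
      case 3
      have "\<forall>\<^sub>F x in at_bot. cdf M x < t"
        using cdf_lim_at_bot \<open>0 < t\<close> by (rule order_tendstoD)
      from eventually_happens'[OF trivial_limit_at_bot_linorder this]
      obtain u where "cdf M u < t" ..
      have "\<forall>\<^sub>F x in at_top. t < cdf M x"
        using cdf_lim_at_top_prob \<open>t < 1\<close> by (rule order_tendstoD)
      from eventually_happens'[OF trivial_limit_at_top_linorder this]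
      obtain v where "t < cdf M v" ..
      note uv = \<open>cdf M u < t\<close> this
      then have "u \<le> v"
        using strict_mono_less_eq[OF mono, of u v] by linarith
      with uv obtain s where s: "cdf M s = t"
        using IVT[of "cdf M" u t v] cont by (auto intro: less_imp_le)
      then have "{x \<in> space M. cdf M x \<le> t} = {..s}"
        using strict_mono_less_eq[OF mono] by auto
      with s show ?thesis by (simp add: cdf_def)
    qed
  qed
  from uniform_distrI_borel_atLeastAtMost[OF F_meas, of 0 1] this
  show ?thesis by simp
qed

locale real_pdf =
  fixes q :: "real \<Rightarrow> real"
  assumes nonneg: "\<And>x. 0 \<le> q x"
    and integrable: "integrable lborel q"
    and integral_eq_1: "(\<integral>x. q x \<partial>lborel) = 1"
begin

abbreviation M :: "real measure" where
  "M \<equiv> density lborel (\<lambda>x. ennreal (q x))"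

lemma borel_measurable_pdf [measurable]: "q \<in> borel_measurable borel"
  using integrable by auto

lemma emeasure_eq_set_integral:
  assumes "A \<in> sets borel"
  shows "emeasure M A = ennreal (LINT x:A|lborel. q x)"
proof -
  have "emeasure M A = (\<integral>\<^sup>+x. ennreal (indicator A x * q x) \<partial>lborel)"
    using assms by (subst emeasure_density) (auto intro!: nn_integral_cong simp: indicator_def)
  also have "\<dots> = ennreal (\<integral>x. indicator A x * q x \<partial>lborel)"
    using assms nonneg integrable_mult_indicator[OF _ integrable, of A]
    by (intro nn_integral_eq_integral) auto
  finally show ?thesis by (simp add: set_lebesgue_integral_def)
qed

lemma real_distribution: "real_distribution M"
proof -
  have "prob_space M"
    using emeasure_eq_set_integral[of UNIV] integral_eq_1
    by (intro prob_spaceI) (simp add: set_lebesgue_integral_def)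
  then show ?thesis by (simp add: real_distribution_def real_distribution_axioms_def)
qed

sublocale real_distribution M
  by (rule real_distribution)

lemma cdf_eq_set_integral: "cdf M x = (LINT t:{..x}|lborel. q t)"
  using emeasure_eq_set_integral[of "{..x}"]
  by (simp add: cdf_def measure_def set_lebesgue_integral_def nonneg)

lemma cdf_in_unit: "cdf M x \<in> {0..1}"
  using cdf_nonneg cdf_bounded_prob by simp

lemma cdf_continuous: "isCont (cdf M) x"
proof -
  have "emeasure M {x} = (\<integral>\<^sup>+t. ennreal (q t) * indicator {x} t \<partial>lborel)"
    by (subst emeasure_density) auto
  also have "\<dots> = 0"
    using AE_lborel_singleton[of x] by (subst nn_integral_0_iff_AE) (auto elim!: eventually_mono)
  finally show ?thesis by (simp add: isCont_cdf measure_def)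
qed

lemma cdf_less_cdf:
  assumes "a < b" and pos: "\<And>x. a < x \<Longrightarrow> x < b \<Longrightarrow> 0 < q x"
  shows "cdf M a < cdf M b"
proof -
  have "emeasure M {a<..b} \<noteq> 0"
  proof
    assume "emeasure M {a<..b} = 0"
    then have "AE x in lborel. ennreal (q x) * indicator {a<..b} x = 0"
      by (subst (asm) emeasure_density, simp, simp, subst (asm) nn_integral_0_iff_AE) auto
    then have "AE x in lborel. x \<notin> {a<..<b}"
      by (rule eventually_mono) (auto simp: indicator_def dest: pos)
    then have "{a<..<b} \<in> null_sets lborel"
      by (subst AE_iff_null_sets) auto
    with \<open>a < b\<close> show False by (simp add: null_sets_def)
  qed
  then show ?thesis
    using emeasure_Ioc[of a b] \<open>a < b\<close>
    by (auto simp: ennreal_eq_0_iff)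
qed

end

locale positive_real_pdf = real_pdf +
  assumes pos: "\<And>x. 0 < q x"
begin

lemma strict_mono_cdf: "strict_mono (cdf M)"
  by (intro strict_monoI cdf_less_cdf pos)

lemma distributed_cdf: "distributed M lborel (cdf M) (\<lambda>x. ennreal (indicator {0..1} x))"
  by (intro distributed_cdf_uniform cdf_continuous strict_mono_cdf)

lemma integral_cdf_transform:
  assumes [measurable]: "g \<in> borel_measurable borel"
  shows "(\<integral>x. q x * g (cdf M x) \<partial>lborel) = (LINT f:{0..1}|lborel. g f)"
proof -
  have [measurable]: "cdf M \<in> borel_measurable borel"
    using distributed_measurable[OF distributed_cdf] by simp
  have "(\<integral>x. q x * g (cdf M x) \<partial>lborel) = (\<integral>x. g (cdf M x) \<partial>M)"
    by (rule integral_real_density[symmetric]) (auto simp: nonneg)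
  also have "\<dots> = (\<integral>f. indicator {0..1} f * g f \<partial>lborel)"
    by (rule distributed_integral[OF distributed_cdf, symmetric]) auto
  finally show ?thesis by (simp add: set_lebesgue_integral_def)
qed

lemma AE_cdf_transform:
  assumes [measurable]: "Measurable.pred borel P"
    and "AE f in lborel. f \<in> {0..1} \<longrightarrow> P f"
  shows "AE x in lborel. P (cdf M x)"
proof -
  have "AE x in M. P (cdf M x)"
    using assms(2) by (subst distributed_AE2[OF distributed_cdf]) (auto elim!: eventually_mono simp: indicator_def)
  then show ?thesis
    by (subst (asm) AE_density) (auto simp: pos)
qed

end

section \<open>Recalibration\<close>

locale recalibration =
  fixes MJ :: "'j measure" and MP :: "'w measure"
    and p :: "'j \<Rightarrow> real \<Rightarrow> real" and PI :: "'w \<Rightarrow> 'j \<Rightarrow> real \<Rightarrow> real"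
  assumes MJ_prob: "prob_space MJ"
    and MP_prob: "prob_space MP"
    and p_pos: "\<And>J x. p J x > 0"
    and p_int: "\<And>J. integrable lborel (p J)"
    and p_norm: "\<And>J. (\<integral>x. p J x \<partial>lborel) = 1"
    and Pi_nonneg: "\<And>w J f. f \<in> {0..1} \<Longrightarrow> PI w J f \<ge> 0"
    and Pi_int: "\<And>w J. set_integrable lborel {0..1} (PI w J)"
    and pibar_pos: "\<And>f. f \<in> {0..1} \<Longrightarrow> pibar MP MJ PI f > 0"
    and pibar_int: "set_integrable lborel {0..1} (pibar MP MJ PI)"
    and pibar_norm: "(LINT f:{0..1}|lborel. pibar MP MJ PI f) = 1"
begin

lemma real_pdf_p: "real_pdf (p J)"
  by unfold_locales (auto intro: less_imp_le p_pos p_int p_norm)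

lemma positive_real_pdf_p: "positive_real_pdf (p J)"
  by (intro positive_real_pdf.intro real_pdf_p) (unfold_locales, rule p_pos)

lemma PIT_eq_cdf: "PIT p J = cdf (density lborel (\<lambda>x. ennreal (p J x)))"
  using real_pdf.cdf_eq_set_integral[OF real_pdf_p]
  by (auto simp: PIT_def)

lemma PIT_in_unit: "PIT p J x \<in> {0..1}"
  unfolding PIT_eq_cdf by (rule real_pdf.cdf_in_unit[OF real_pdf_p])

lemma strict_mono_PIT: "strict_mono (PIT p J)"
  unfolding PIT_eq_cdf by (rule positive_real_pdf.strict_mono_cdf[OF positive_real_pdf_p])

lemma integral_PIT_transform:
  "g \<in> borel_measurable borel \<Longrightarrow> (\<integral>x. p J x * g (PIT p J x) \<partial>lborel) = (LINT f:{0..1}|lborel. g f)"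
  unfolding PIT_eq_cdf by (rule positive_real_pdf.integral_cdf_transform[OF positive_real_pdf_p])

lemma AE_PIT_transform:
  "Measurable.pred borel P \<Longrightarrow> (AE f in lborel. f \<in> {0..1} \<longrightarrow> P f) \<Longrightarrow> AE x in lborel. P (PIT p J x)"
  unfolding PIT_eq_cdf by (rule positive_real_pdf.AE_cdf_transform[OF positive_real_pdf_p])

lemma delta_s_eq_KL_diff:
  assumes "integrable lborel (\<lambda>x. PiX PI p w J x * log 2 (PiX PI p w J x / p J x))"
    and "integrable lborel (\<lambda>x. PiX PI p w J x * log 2 (PiX PI p w J x / p1 MP MJ PI p J x))"
  shows "delta_s MP MJ PI p w J = KL (PiX PI p w J) (p J) - KL (PiX PI p w J) (p1 MP MJ PI p J)"
proof -
  have "PiX PI p w J x * log 2 (p1 MP MJ PI p J x / p J x)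
      = PiX PI p w J x * log 2 (PiX PI p w J x / p J x)
        - PiX PI p w J x * log 2 (PiX PI p w J x / p1 MP MJ PI p J x)" for x
  proof (cases "PI w J (PIT p J x) = 0")
    case False
    with Pi_nonneg[OF PIT_in_unit] have "0 < PI w J (PIT p J x)"
      by (simp add: order_less_le)
    with p_pos[of J x] pibar_pos[OF PIT_in_unit[of J x]] show ?thesis
      by (simp add: PiX_def p1_def log_divide log_mult algebra_simps)
  qed (simp add: PiX_def)
  then show ?thesis
    using assms unfolding delta_s_def KL_def by (simp add: Bochner_Integration.integral_diff)
qed

lemma indicator_pibar_measurable [measurable]:
  "(\<lambda>f. indicator {0..1} f * pibar MP MJ PI f) \<in> borel_measurable borel"
  using pibar_int by (auto simp: set_integrable_def dest: borel_measurable_integrable)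

lemma indicator_Pi_measurable [measurable]:
  "(\<lambda>f. indicator {0..1} f * PI w J f) \<in> borel_measurable borel"
  using Pi_int by (auto simp: set_integrable_def dest: borel_measurable_integrable)

lemma delta_s_eq_set_integral:
  "delta_s MP MJ PI p w J = (LINT f:{0..1}|lborel. PI w J f * log 2 (pibar MP MJ PI f))"
proof -
  \<comment> \<open>The indicators only serve measurability: pibar and PI are known to be measurable on [0,1] only.\<close>
  let ?G = "\<lambda>f. (indicator {0..1} f * PI w J f) * log 2 (indicator {0..1} f * pibar MP MJ PI f)"
  have "PiX PI p w J x * log 2 (p1 MP MJ PI p J x / p J x) = p J x * ?G (PIT p J x)" for x
    using PIT_in_unit[of J x] p_pos[of J x] by (simp add: PiX_def p1_def)
  then have "delta_s MP MJ PI p w J = (\<integral>x. p J x * ?G (PIT p J x) \<partial>lborel)"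
    by (simp add: delta_s_def)
  also have "\<dots> = (LINT f:{0..1}|lborel. ?G f)"
    by (rule integral_PIT_transform) measurable
  also have "\<dots> = (LINT f:{0..1}|lborel. PI w J f * log 2 (pibar MP MJ PI f))"
    by (rule set_lebesgue_integral_cong) auto
  finally show ?thesis .
qed

lemma
  assumes h: "integrable (MP \<Otimes>\<^sub>M MJ \<Otimes>\<^sub>M lborel)
    (\<lambda>(w, J, f). indicator {0..1} f * PI w J f * log 2 (pibar MP MJ PI f))"
  shows set_integrable_pibar_log:
      "set_integrable lborel {0..1} (\<lambda>f. pibar MP MJ PI f * log 2 (pibar MP MJ PI f))"
    and expected_delta_s:
      "(\<integral>w. (\<integral>J. delta_s MP MJ PI p w J \<partial>MJ) \<partial>MP)
        = (LINT f:{0..1}|lborel. pibar MP MJ PI f * log 2 (pibar MP MJ PI f))"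
proof -
  have sf: "sigma_finite_measure MP" "sigma_finite_measure MJ" "sigma_finite_measure lborel"
    using MP_prob MJ_prob by (auto intro: prob_space_imp_sigma_finite lborel.sigma_finite_measure_axioms)
  have inner: "(\<integral>w. \<integral>J. indicator {0..1} f * PI w J f * log 2 (pibar MP MJ PI f) \<partial>MJ \<partial>MP)
      = indicator {0..1} f * (pibar MP MJ PI f * log 2 (pibar MP MJ PI f))" for f
    by (simp add: pibar_def PiC_def)
  show "set_integrable lborel {0..1} (\<lambda>f. pibar MP MJ PI f * log 2 (pibar MP MJ PI f))"
    using integrable_iterated_integral_snd[OF sf h] unfolding inner by (simp add: set_integrable_def)
  have "(\<integral>w. (\<integral>J. delta_s MP MJ PI p w J \<partial>MJ) \<partial>MP)
      = (\<integral>w. \<integral>J. \<integral>f. indicator {0..1} f * PI w J f * log 2 (pibar MP MJ PI f) \<partial>lborel \<partial>MJ \<partial>MP)"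
    by (simp add: delta_s_eq_set_integral set_lebesgue_integral_def mult.assoc)
  also have "\<dots> = (\<integral>f. \<integral>w. \<integral>J. indicator {0..1} f * PI w J f * log 2 (pibar MP MJ PI f) \<partial>MJ \<partial>MP \<partial>lborel)"
    by (rule Fubini_integral_triple[OF sf h])
  also have "\<dots> = (LINT f:{0..1}|lborel. pibar MP MJ PI f * log 2 (pibar MP MJ PI f))"
    unfolding inner by (simp add: set_lebesgue_integral_def)
  finally show "(\<integral>w. (\<integral>J. delta_s MP MJ PI p w J \<partial>MJ) \<partial>MP)
      = (LINT f:{0..1}|lborel. pibar MP MJ PI f * log 2 (pibar MP MJ PI f))" .
qed

lemma p1_eq_p_AE:
  assumes "AE f in lborel. f \<in> {0..1} \<longrightarrow> pibar MP MJ PI f = 1"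
  shows "AE x in lborel. p1 MP MJ PI p J x = p J x"
proof -
  have "AE x in lborel. indicator {0..1} (PIT p J x) * pibar MP MJ PI (PIT p J x) = indicator {0..1} (PIT p J x)"
  proof (rule AE_PIT_transform[where P = "\<lambda>f. indicator {0..1} f * pibar MP MJ PI f = indicator {0..1} f"])
    show "AE f in lborel. f \<in> {0..1} \<longrightarrow> indicator {0..1} f * pibar MP MJ PI f = indicator {0..1} f"
      using assms by (auto elim!: eventually_mono)
  qed measurable
  then show ?thesis
    by (rule eventually_mono) (use PIT_in_unit in \<open>simp add: p1_def\<close>)
qed

lemma Gt_PIT: "Gt MP MJ PI (PIT p J x) = PIT (p1 MP MJ PI p) J x"
proof -
  let ?g = "\<lambda>u. indicator {..PIT p J x} u * (indicator {0..1} u * pibar MP MJ PI u)"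
  have "indicator {..x} t * p1 MP MJ PI p J t = p J t * ?g (PIT p J t)" for t
    using strict_mono_less_eq[OF strict_mono_PIT[of J], of t x] PIT_in_unit[of J t]
    by (simp add: p1_def indicator_def)
  then have "PIT (p1 MP MJ PI p) J x = (\<integral>t. p J t * ?g (PIT p J t) \<partial>lborel)"
    by (simp add: PIT_def set_lebesgue_integral_def)
  also have "\<dots> = (LINT u:{0..1}|lborel. ?g u)"
    by (rule integral_PIT_transform) measurable
  also have "\<dots> = Gt MP MJ PI (PIT p J x)"
    using PIT_in_unit[of J x] unfolding Gt_def set_lebesgue_integral_def
    by (intro Bochner_Integration.integral_cong) (auto simp: indicator_def)
  finally show ?thesis ..
qed

lemma real_pdf_pibar: "real_pdf (\<lambda>f. indicator {0..1} f * pibar MP MJ PI f)"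
  using pibar_pos pibar_int pibar_norm
  by unfold_locales (auto simp: indicator_def less_imp_le set_integrable_def set_lebesgue_integral_def)

lemma Gt_eq_cdf:
  assumes "f \<in> {0..1}"
  shows "Gt MP MJ PI f = cdf (density lborel (\<lambda>x. ennreal (indicator {0..1} x * pibar MP MJ PI x))) f"
  using assms unfolding real_pdf.cdf_eq_set_integral[OF real_pdf_pibar] Gt_def set_lebesgue_integral_def
  by (intro Bochner_Integration.integral_cong) (auto simp: indicator_def)

lemma inj_on_Gt: "inj_on (Gt MP MJ PI) {0..1}"
proof (rule strict_mono_on_imp_inj_on, rule strict_mono_onI)
  fix a b :: real assume "a \<in> {0..1}" "b \<in> {0..1}" "a < b"
  then show "Gt MP MJ PI a < Gt MP MJ PI b"
    unfolding Gt_eq_cdf[OF \<open>a \<in> {0..1}\<close>] Gt_eq_cdf[OF \<open>b \<in> {0..1}\<close>]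
    by (intro real_pdf.cdf_less_cdf[OF real_pdf_pibar]) (auto intro: pibar_pos)
qed

lemma atLeastAtMost_subset_image_Gt: "{0..1} \<subseteq> Gt MP MJ PI ` {0..1}"
proof
  fix g :: real assume g: "g \<in> {0..1}"
  have "continuous_on {0..1} (Gt MP MJ PI)"
    using real_pdf.cdf_continuous[OF real_pdf_pibar]
    by (subst continuous_on_cong[OF refl Gt_eq_cdf]) (auto intro: continuous_at_imp_continuous_on)
  moreover have "Gt MP MJ PI 0 = 0"
  proof -
    have "AE t in lborel. indicator {0..0} t * pibar MP MJ PI t = (0::real)"
      using AE_lborel_singleton[of 0] by (rule eventually_mono) (simp add: indicator_def)
    then show ?thesis
      unfolding Gt_def set_lebesgue_integral_def by (simp add: integral_eq_zero_AE)
  qed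
  moreover have "Gt MP MJ PI 1 = 1"
    using pibar_norm by (simp add: Gt_def)
  ultimately show "g \<in> Gt MP MJ PI ` {0..1}"
    using IVT'[of "Gt MP MJ PI" 0 g 1] g by force
qed

lemma expected_PiGC:
  assumes "g \<in> {0..1}"
  shows "(\<integral>w. PiGC MP MJ PI w g \<partial>MP) = 1"
proof -
  define f where "f = the_inv_into {0..1} (Gt MP MJ PI) g"
  have f: "f \<in> {0..1}"
    unfolding f_def using the_inv_into_into[OF inj_on_Gt] atLeastAtMost_subset_image_Gt assms by blast
  have "(\<integral>w. PiGC MP MJ PI w g \<partial>MP) = (\<integral>w. PiC MJ PI w f / pibar MP MJ PI f \<partial>MP)"
    by (simp add: PiGC_def PiG_def PiC_def Let_def f_def)
  also have "\<dots> = pibar MP MJ PI f / pibar MP MJ PI f"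
    by (simp add: pibar_def)
  also have "\<dots> = 1"
    using pibar_pos[OF f] by simp
  finally show ?thesis .
qed

end

theorem theorem1:
  fixes MJ :: "'j measure" and MP :: "'w measure"
    and p :: "'j \<Rightarrow> real \<Rightarrow> real"
    and PI :: "'w \<Rightarrow> 'j \<Rightarrow> real \<Rightarrow> real"
  assumes MJ_prob: "prob_space MJ"
    and MP_prob: "prob_space MP"
    and p_pos: "\<And>J x. p J x > 0"
    and p_int: "\<And>J. integrable lborel (p J)"
    and p_norm: "\<And>J. (\<integral>x. p J x \<partial>lborel) = 1"
    and p_meas: "(\<lambda>(J, x). p J x) \<in> borel_measurable (MJ \<Otimes>\<^sub>M lborel)"
    and Pi_nonneg: "\<And>w J f. f \<in> {0..1} \<Longrightarrow> PI w J f \<ge> 0"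
    and Pi_int: "\<And>w J. set_integrable lborel {0..1} (PI w J)"
    and Pi_norm: "\<And>w J. (LINT f:{0..1}|lborel. PI w J f) = 1"
    and Pi_meas: "(\<lambda>(w, J, f). PI w J f) \<in> borel_measurable (MP \<Otimes>\<^sub>M MJ \<Otimes>\<^sub>M lborel)"
    and pibar_pos: "\<And>f. f \<in> {0..1} \<Longrightarrow> pibar MP MJ PI f > 0"
    and pibar_int: "set_integrable lborel {0..1} (pibar MP MJ PI)"
    and pibar_norm: "(LINT f:{0..1}|lborel. pibar MP MJ PI f) = 1"
    and fub1: "integrable (MP \<Otimes>\<^sub>M MJ \<Otimes>\<^sub>M lborel)
                 (\<lambda>(w, J, f). indicator {0..1} f * PI w J f)"
    and fub2: "integrable (MP \<Otimes>\<^sub>M MJ \<Otimes>\<^sub>M lborel)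
                 (\<lambda>(w, J, f). indicator {0..1} f * PI w J f * log 2 (pibar MP MJ PI f))"
    and ds_int: "\<And>w J. integrable lborel
                   (\<lambda>x. PiX PI p w J x * log 2 (p1 MP MJ PI p J x / p J x))"
    and ds_intJ: "\<And>w. integrable MJ (\<lambda>J. delta_s MP MJ PI p w J)"
    and ds_intP: "integrable MP (\<lambda>w. \<integral>J. delta_s MP MJ PI p w J \<partial>MJ)"
  shows
    "(\<forall>w J. integrable lborel (\<lambda>x. PiX PI p w J x * log 2 (PiX PI p w J x / p J x))
          \<and> integrable lborel (\<lambda>x. PiX PI p w J x * log 2 (PiX PI p w J x / p1 MP MJ PI p J x))
          \<longrightarrow> delta_s MP MJ PI p w J
               = KL (PiX PI p w J) (p J) - KL (PiX PI p w J) (p1 MP MJ PI p J))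
     \<and> (\<integral>w. (\<integral>J. delta_s MP MJ PI p w J \<partial>MJ) \<partial>MP)
         = (LINT f:{0..1}|lborel. pibar MP MJ PI f * log 2 (pibar MP MJ PI f))
     \<and> (LINT f:{0..1}|lborel. pibar MP MJ PI f * log 2 (pibar MP MJ PI f)) \<ge> 0
     \<and> ((LINT f:{0..1}|lborel. pibar MP MJ PI f * log 2 (pibar MP MJ PI f)) = 0
         \<longleftrightarrow> (AE f in lborel. f \<in> {0..1} \<longrightarrow> pibar MP MJ PI f = 1))
     \<and> ((AE f in lborel. f \<in> {0..1} \<longrightarrow> pibar MP MJ PI f = 1)
         \<longrightarrow> (\<forall>J. AE x in lborel. p1 MP MJ PI p J x = p J x))
     \<and> (\<forall>J x. Gt MP MJ PI (PIT p J x) = PIT (p1 MP MJ PI p) J x)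
     \<and> (\<forall>g\<in>{0..1}. (\<integral>w. PiGC MP MJ PI w g \<partial>MP) = 1)"
proof -
  \<comment> \<open>Of the integrability hypotheses only fub2 enters the argument.\<close>
  interpret recalibration MJ MP p PI
    by (rule recalibration.intro) fact+
  have pibar_log_int: "set_integrable lborel {0..1} (\<lambda>f. pibar MP MJ PI f * log 2 (pibar MP MJ PI f))"
    using fub2 by (rule set_integrable_pibar_log)
  have unit_interval: "{0..1::real} \<in> sets lborel" "emeasure lborel {0..1::real} = 1" "1 < (2::real)"
    by simp_all
  note Gibbs_pibar =
    set_integral_mult_log_nonneg[OF unit_interval pibar_pos pibar_int pibar_norm pibar_log_int]
    set_integral_mult_log_eq_0_iff[OF unit_interval pibar_pos pibar_int pibar_norm pibar_log_int]
  show ?thesis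
    using delta_s_eq_KL_diff expected_delta_s[OF fub2] Gibbs_pibar p1_eq_p_AE Gt_PIT expected_PiGC
    by auto
qed

end
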